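(* Let $E=\mathbb{R}^n$ with the Euclidean norm $\|\cdot\|_2$ and prox-function $d(x)=\frac12\|x\|_2^2$ (so $\psi_0(x)=\frac12\|x-x^0\|_2^2$). Let $f$ be convex and $L$-smooth with a minimizer $x_*$, and set $R=\|x^0-x_*\|_2$. For the iterates of Algorithm AGMsDR and $k\ge1$ define $$\hat f^k=\min_{x:\,\|x-x^0\|_2\le R}\ \frac{1}{A_k}\sum_{i=0}^{k-1}a_{i+1}\big\{f(y^i)+\langle\nabla f(y^i),x-y^i\rangle\big\}.$$ Then $\hat f^k\le f(x_* )$ and $f(x^k)-\hat f^k\le\frac{R^2}{2A_k}$; in particular $f(x^k)-f(x_* )\le f(x^k)-\hat f^k\le\frac{R^2}{2A_k}$.
   Context: A function $f:\mathbb{R}^n\to\mathbb{R}$ is $L$-smooth ($L>0$) if it is continuously differentiable and $\|\nabla f(x)-\nabla f(y)\|_2\le L\|x-y\|_2$ for all $x,y$. For $g\neq0$, $g^{\#}=g/\|g\|_2$. Algorithm AGMsDR (Euclidean case; input $x^0$, and $L$ for Option (a)): set $A_0=0$, $v^0=x^0$, $\psi_0(x)=\frac12\|x-x^0\|_2^2$. For $k=0,1,2,\dots$: 1. Choose $\beta_k\in\arg\min_{\beta\in[0,1]} f(v^k+\beta(x^k-v^k))$ and set $y^k=v^k+\beta_k(x^k-v^k)$. 2. Option (a): $x^{k+1}=y^k-\frac1L\nabla f(y^k)$, and $a_{k+1}>0$ solves $\frac{a_{k+1}^2}{A_k+a_{k+1}}=\frac1L$. Option (b): $h_{k+1}\in\arg\min_{h\ge0}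 f(y^k-h(\nabla f(y^k))^{\#})$, $x^{k+1}=y^k-h_{k+1}(\nabla f(y^k))^{\#}$, and $a_{k+1}$ is the largest solution of $f(y^k)-\frac{a_{k+1}^2}{2(A_k+a_{k+1})}\|\nabla f(y^k)\|_2^2=f(x^{k+1})$. 3. $A_{k+1}=A_k+a_{k+1}$; $\psi_{k+1}(x)=\psi_k(x)+a_{k+1}\{f(y^k)+\langle\nabla f(y^k),x-y^k\rangle\}$; $v^{k+1}=\arg\min_{x}\psi_{k+1}(x)$. All minima are assumed attained and $\nabla f(y^k)\ne0$ for all iterations considered. *)

theory Defs
  imports "HOL-Analysis.Analysis"
begin

text \<open>Gradient is given as a function g with f having derivative (h maps to inner (g x) h).
  Linear model: sum over i<k of a(i+1) (f(y i) + <g(y i), z - y i>).\<close>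

definition lin_model :: "('a::euclidean_space \<Rightarrow> real) \<Rightarrow> ('a \<Rightarrow> 'a) \<Rightarrow> (nat \<Rightarrow> real)
    \<Rightarrow> (nat \<Rightarrow> 'a) \<Rightarrow> nat \<Rightarrow> 'a \<Rightarrow> real" where
  "lin_model f g a y k z = (\<Sum>i<k. a (Suc i) * (f (y i) + g (y i) \<bullet> (z - y i)))"

definition psi :: "'a::euclidean_space \<Rightarrow> ('a \<Rightarrow> real) \<Rightarrow> ('a \<Rightarrow> 'a) \<Rightarrow> (nat \<Rightarrow> real)
    \<Rightarrow> (nat \<Rightarrow> 'a) \<Rightarrow> nat \<Rightarrow> 'a \<Rightarrow> real" where
  "psi x0 f g a y k z = (1/2) * (norm (z - x0))^2 + lin_model f g a y k z"

definition agmsdr_common :: "('a::euclidean_space \<Rightarrow> real) \<Rightarrow> ('a \<Rightarrow> 'a) \<Rightarrow> 'a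
    \<Rightarrow> (nat \<Rightarrow> 'a) \<Rightarrow> (nat \<Rightarrow> 'a) \<Rightarrow> (nat \<Rightarrow> 'a) \<Rightarrow> (nat \<Rightarrow> real) \<Rightarrow> (nat \<Rightarrow> real)
    \<Rightarrow> (nat \<Rightarrow> real) \<Rightarrow> bool" where
  "agmsdr_common f g x0 x v y A a beta \<longleftrightarrow>
     A 0 = 0 \<and> v 0 = x0 \<and> x 0 = x0 \<and>
     (\<forall>k. beta k \<in> {0..1} \<and>
          (\<forall>b\<in>{0..1}. f (v k + beta k *\<^sub>R (x k - v k)) \<le> f (v k + b *\<^sub>R (x k - v k))) \<and>
          y k = v k + beta k *\<^sub>R (x k - v k) \<and>
          A (Suc k) = A k + a (Suc k) \<and>
          (\<forall>z. psi x0 f g a y (Suc k) (v (Suc k)) \<le> psi x0 f g a y (Suc k) z))"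

definition agmsdr_opt_a :: "('a::euclidean_space \<Rightarrow> real) \<Rightarrow> ('a \<Rightarrow> 'a) \<Rightarrow> real \<Rightarrow> 'a
    \<Rightarrow> (nat \<Rightarrow> 'a) \<Rightarrow> (nat \<Rightarrow> 'a) \<Rightarrow> (nat \<Rightarrow> 'a) \<Rightarrow> (nat \<Rightarrow> real) \<Rightarrow> (nat \<Rightarrow> real)
    \<Rightarrow> (nat \<Rightarrow> real) \<Rightarrow> bool" where
  "agmsdr_opt_a f g L x0 x v y A a beta \<longleftrightarrow>
     agmsdr_common f g x0 x v y A a beta \<and>
     (\<forall>k. x (Suc k) = y k - (1 / L) *\<^sub>R g (y k) \<and>
          a (Suc k) > 0 \<and> (a (Suc k))^2 / (A k + a (Suc k)) = 1 / L)"

definition agmsdr_opt_b :: "('a::euclidean_space \<Rightarrow> real) \<Rightarrow> ('a \<Rightarrow> 'a) \<Rightarrow> 'a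
    \<Rightarrow> (nat \<Rightarrow> 'a) \<Rightarrow> (nat \<Rightarrow> 'a) \<Rightarrow> (nat \<Rightarrow> 'a) \<Rightarrow> (nat \<Rightarrow> real) \<Rightarrow> (nat \<Rightarrow> real)
    \<Rightarrow> (nat \<Rightarrow> real) \<Rightarrow> (nat \<Rightarrow> real) \<Rightarrow> bool" where
  "agmsdr_opt_b f g x0 x v y A a beta h \<longleftrightarrow>
     agmsdr_common f g x0 x v y A a beta \<and>
     (\<forall>k. h (Suc k) \<ge> 0 \<and>
          (\<forall>t\<ge>0. f (y k - h (Suc k) *\<^sub>R ((1 / norm (g (y k))) *\<^sub>R g (y k)))
                  \<le> f (y k - t *\<^sub>R ((1 / norm (g (y k))) *\<^sub>R g (y k)))) \<and>
          x (Suc k) = y k - h (Suc k) *\<^sub>R ((1 / norm (g (y k))) *\<^sub>R g (y k)) \<and>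
          f (y k) - (a (Suc k))^2 / (2 * (A k + a (Suc k))) * (norm (g (y k)))^2 = f (x (Suc k)) \<and>
          (\<forall>a'. f (y k) - a'^2 / (2 * (A k + a')) * (norm (g (y k)))^2 = f (x (Suc k))
                 \<longrightarrow> a' \<le> a (Suc k)))"

end

theory Submission
  imports Defs
begin

text \<open>The estimate functions satisfy \<open>A\<^sub>k f(x\<^sub>k) \<le> min \<psi>\<^sub>k\<close>. Going from \<open>k\<close> to \<open>k+1\<close>:
  \<open>\<psi>\<^sub>k\<close> grows like \<open>\<parallel>z - v\<^sub>k\<parallel>\<^sup>2/2\<close> around its minimiser \<open>v\<^sub>k\<close>; convexity and the line-search
  conditions \<open>\<langle>\<nabla>f(y\<^sub>k), x\<^sub>k - y\<^sub>k\<rangle> \<ge> 0\<close>, \<open>\<langle>\<nabla>f(y\<^sub>k), v\<^sub>k - y\<^sub>k\<rangle> \<ge> 0\<close> bound the new linear term from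
  below by \<open>f(y\<^sub>k)\<close>, and completing the square against the guaranteed decrease
  \<open>A\<^sub>k\<^sub>+\<^sub>1 f(x\<^sub>k\<^sub>+\<^sub>1) \<le> A\<^sub>k\<^sub>+\<^sub>1 f(y\<^sub>k) - a\<^sub>k\<^sub>+\<^sub>1\<^sup>2 \<parallel>\<nabla>f(y\<^sub>k)\<parallel>\<^sup>2/2\<close> of the gradient step closes the induction.
  On the ball of radius \<open>R\<close> around \<open>x\<^sub>0\<close> the prox term of \<open>\<psi>\<^sub>k\<close> is at most \<open>R\<^sup>2/2\<close>, which gives the
  lower bound on the model minimum; the upper bound \<open>f(x\<^sub>*)\<close> holds because every linearisation lies
  below the convex \<open>f\<close>.\<close>

lemma has_real_derivative_along_line:
  fixes f :: "'a::real_inner \<Rightarrow> real"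
  assumes grad: "\<And>z. (f has_derivative (\<lambda>d. g z \<bullet> d)) (at z)"
  shows "((\<lambda>t. f (y + t *\<^sub>R d)) has_real_derivative (g (y + t *\<^sub>R d) \<bullet> d)) (at t)"
proof -
  have line: "((\<lambda>t. y + t *\<^sub>R d) has_derivative (\<lambda>h. h *\<^sub>R d)) (at t)"
    by (auto intro!: derivative_eq_intros)
  have "((\<lambda>t. f (y + t *\<^sub>R d)) has_derivative (\<lambda>h. g (y + t *\<^sub>R d) \<bullet> (h *\<^sub>R d))) (at t)"
    using has_derivative_compose[OF line grad] by (simp add: o_def)
  moreover have "(\<lambda>h. h * (g (y + t *\<^sub>R d) \<bullet> d)) = (*) (g (y + t *\<^sub>R d) \<bullet> d)"
    by (auto simp: mult.commute)
  ultimately show ?thesis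
    unfolding has_field_derivative_def by simp
qed

lemma lipschitz_gradient_upper_bound:
  fixes f :: "'a::real_inner \<Rightarrow> real"
  assumes grad: "\<And>z. (f has_derivative (\<lambda>d. g z \<bullet> d)) (at z)"
    and lip: "\<And>z w. norm (g z - g w) \<le> L * norm (z - w)"
  shows "f (y + d) \<le> f y + g y \<bullet> d + L / 2 * (norm d)^2"
proof -
  define p where "p t = f (y + t *\<^sub>R d) - t * (g y \<bullet> d) - L / 2 * t^2 * (norm d)^2" for t
  have "p 1 \<le> p 0"
  proof (rule DERIV_nonpos_imp_nonincreasing[of 0 1])
    fix t :: real assume t: "0 \<le> t" "t \<le> 1"
    have "(p has_real_derivative (g (y + t *\<^sub>R d) \<bullet> d - g y \<bullet> d - L / 2 * (2 * t) * (norm d)^2)) (at t)"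
      unfolding p_def by (auto intro!: derivative_eq_intros has_real_derivative_along_line[OF grad])
    moreover have "g (y + t *\<^sub>R d) \<bullet> d - g y \<bullet> d \<le> L * t * (norm d)^2"
    proof -
      have "g (y + t *\<^sub>R d) \<bullet> d - g y \<bullet> d = (g (y + t *\<^sub>R d) - g y) \<bullet> d"
        by (simp add: inner_diff_left)
      also have "\<dots> \<le> norm (g (y + t *\<^sub>R d) - g y) * norm d"
        by (rule norm_cauchy_schwarz)
      also have "\<dots> \<le> L * norm (t *\<^sub>R d) * norm d"
        using lip[of "y + t *\<^sub>R d" y] by (simp add: mult_right_mono)
      also have "\<dots> = L * t * (norm d)^2"
        using t by (simp add: power2_eq_square)
      finally show ?thesis .
    qed
    ultimately show "\<exists>D. (p has_real_derivative D) (at t) \<and> D \<le> 0"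
      by force
  qed simp
  then show ?thesis
    unfolding p_def by simp
qed

lemma convex_on_gradient_inequality:
  fixes f :: "'a::real_inner \<Rightarrow> real"
  assumes grad: "\<And>z. (f has_derivative (\<lambda>d. g z \<bullet> d)) (at z)"
    and cvx: "convex_on UNIV f"
  shows "f y + g y \<bullet> (z - y) \<le> f z"
proof -
  define p where "p t = f (y + t *\<^sub>R (z - y))" for t
  have convex: "convex_on UNIV p"
  proof (rule convex_onI)
    fix t s1 s2 :: real assume t: "0 < t" "t < 1"
    have "y + ((1 - t) *\<^sub>R s1 + t *\<^sub>R s2) *\<^sub>R (z - y)
        = (1 - t) *\<^sub>R (y + s1 *\<^sub>R (z - y)) + t *\<^sub>R (y + s2 *\<^sub>R (z - y))"
      by (simp add: algebra_simps)
    then show "p ((1 - t) *\<^sub>R s1 + t *\<^sub>R s2) \<le> (1 - t) * p s1 + t * p s2"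
      unfolding p_def using convex_onD[OF cvx, of t] t by simp
  qed simp
  have deriv: "(p has_real_derivative (g y \<bullet> (z - y))) (at 0 within UNIV)"
    unfolding p_def using has_real_derivative_along_line[OF grad, of y "z - y" 0] by simp
  have "p 1 - p 0 \<ge> (g y \<bullet> (z - y)) * (1 - 0)"
    using convex_on_imp_above_tangent[OF convex _ _ _ deriv, of 1] by auto
  then show ?thesis
    unfolding p_def by simp
qed

text \<open>First-order optimality of \<open>\<beta> \<mapsto> f(v + \<beta>(x - v))\<close> on \<open>[0,1]\<close>: the derivative is \<open>\<ge> 0\<close>
  unless \<open>\<beta> = 1\<close> and \<open>\<le> 0\<close> unless \<open>\<beta> = 0\<close>, and the factors \<open>1 - \<beta>\<close>, \<open>-\<beta>\<close> kill the bad cases.\<close>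

lemma segment_line_search_optimality:
  fixes f :: "'a::real_inner \<Rightarrow> real"
  assumes grad: "\<And>z. (f has_derivative (\<lambda>d. g z \<bullet> d)) (at z)"
    and beta: "beta \<in> {0..1}"
    and min: "\<forall>c\<in>{0..1}. f (v + beta *\<^sub>R (x - v)) \<le> f (v + c *\<^sub>R (x - v))"
    and y: "y = v + beta *\<^sub>R (x - v)"
  shows "g y \<bullet> (x - y) \<ge> 0" and "g y \<bullet> (v - y) \<ge> 0"
proof -
  define l where "l = g y \<bullet> (x - v)"
  define p where "p t = f (v + t *\<^sub>R (x - v))" for t
  have D: "DERIV p beta :> l"
    unfolding p_def l_def y by (rule has_real_derivative_along_line[OF grad])
  have right: "l \<ge> 0" if "beta < 1"
  proof (rule ccontr)
    assume "\<not> l \<ge> 0"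
    then obtain d where d: "d > 0" "\<forall>h>0. h < d \<longrightarrow> p beta > p (beta + h)"
      using DERIV_neg_dec_right[OF D] by force
    define h where "h = min (d/2) ((1 - beta)/2)"
    have "h > 0" "h < d" "beta + h \<in> {0..1}"
      using d that beta unfolding h_def by (auto simp: min_def field_simps)
    then have "p beta > p (beta + h)" "p beta \<le> p (beta + h)"
      using d min unfolding p_def by auto
    then show False
      by linarith
  qed
  have left: "l \<le> 0" if "beta > 0"
  proof (rule ccontr)
    assume "\<not> l \<le> 0"
    then obtain d where d: "d > 0" "\<forall>h>0. h < d \<longrightarrow> p (beta - h) < p beta"
      using DERIV_pos_inc_left[OF D] by force
    define h where "h = min (d/2) (beta/2)"
    have "h > 0" "h < d" "beta - h \<in> {0..1}"
      using d that beta unfolding h_def by (auto simp: min_def field_simps)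
    then have "p beta > p (beta - h)" "p beta \<le> p (beta - h)"
      using d min unfolding p_def by auto
    then show False
      by linarith
  qed
  have "x - y = (1 - beta) *\<^sub>R (x - v)" "v - y = (- beta) *\<^sub>R (x - v)"
    unfolding y by (simp_all add: algebra_simps)
  then have "g y \<bullet> (x - y) = (1 - beta) * l" "g y \<bullet> (v - y) = (- beta) * l"
    unfolding l_def by simp_all
  moreover have "(1 - beta) * l \<ge> 0"
    using beta right by (cases "beta < 1") auto
  moreover have "(- beta) * l \<ge> 0"
    using beta left by (cases "beta > 0") (auto simp: mult_nonneg_nonpos)
  ultimately show "g y \<bullet> (x - y) \<ge> 0" "g y \<bullet> (v - y) \<ge> 0"
    by simp_all
qed

lemma largest_root_pos:
  fixes A c a :: real
  assumes "A \<ge> 0" "c > 0"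
    and largest: "\<And>b. b^2 / (2 * (A + b)) = c \<Longrightarrow> b \<le> a"
  shows "a > 0"
proof -
  define b where "b = c + sqrt (c^2 + 2 * c * A)"
  have "(sqrt (c^2 + 2 * c * A))^2 = c^2 + 2 * c * A"
    using assms by simp
  then have "b^2 = 2 * c * (A + b)"
    unfolding b_def by (simp add: power2_eq_square algebra_simps)
  moreover have "b > 0"
    unfolding b_def using assms by (intro add_pos_nonneg real_sqrt_ge_zero) auto
  ultimately have "b^2 / (2 * (A + b)) = c"
    using assms by (simp add: field_simps)
  then show ?thesis
    using largest \<open>b > 0\<close> by force
qed

lemma lin_model_diff:
  "lin_model f g a y k z - lin_model f g a y k w = (\<Sum>i<k. a (Suc i) *\<^sub>R g (y i)) \<bullet> (z - w)"
  unfolding lin_model_def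
  by (simp add: sum_subtractf[symmetric] inner_sum_left inner_diff_right algebra_simps)

lemma lin_model_Suc:
  "lin_model f g a y (Suc k) z = lin_model f g a y k z + a (Suc k) * (f (y k) + g (y k) \<bullet> (z - y k))"
  unfolding lin_model_def by simp

lemma lin_model_le_sum_mult:
  fixes f :: "'a::euclidean_space \<Rightarrow> real"
  assumes grad: "\<And>z. (f has_derivative (\<lambda>d. g z \<bullet> d)) (at z)"
    and cvx: "convex_on UNIV f"
    and a_nonneg: "\<And>i. a (Suc i) \<ge> 0"
  shows "lin_model f g a y k z \<le> (\<Sum>i<k. a (Suc i)) * f z"
  unfolding lin_model_def sum_distrib_right
  by (intro sum_mono mult_left_mono convex_on_gradient_inequality[OF grad cvx] a_nonneg)

text \<open>\<open>\<psi>\<^sub>k\<close> is \<open>\<parallel>z - x\<^sub>0\<parallel>\<^sup>2/2\<close> plus an affine function; testing the minimiser \<open>v\<close> against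
  \<open>v - w\<close>, with \<open>w\<close> the gradient of \<open>\<psi>\<^sub>k\<close> at \<open>v\<close>, shows \<open>w = 0\<close>.\<close>

lemma psi_eq_minimum_plus_dist:
  assumes min: "\<And>z. psi x0 f g a y k v \<le> psi x0 f g a y k z"
  shows "psi x0 f g a y k z = psi x0 f g a y k v + 1/2 * (norm (z - v))^2"
proof -
  define G where "G = (\<Sum>i<k. a (Suc i) *\<^sub>R g (y i))"
  have diff: "psi x0 f g a y k z - psi x0 f g a y k w
      = 1/2 * (norm (z - x0))^2 - 1/2 * (norm (w - x0))^2 + G \<bullet> (z - w)" for z w
    unfolding psi_def using lin_model_diff[of f g a y k z w] G_def by simp
  define w where "w = v - x0 + G"
  have "0 \<le> psi x0 f g a y k (v - w) - psi x0 f g a y k v"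
    using min[of "v - w"] by simp
  also have "\<dots> = - 1/2 * (norm w)^2"
    unfolding diff w_def power2_norm_eq_inner
    by (simp add: inner_diff_left inner_diff_right inner_add_left inner_add_right inner_commute algebra_simps)
  finally have "G = x0 - v"
    unfolding w_def by (simp add: algebra_simps)
  then have "psi x0 f g a y k z - psi x0 f g a y k v
      = 1/2 * (norm (z - x0))^2 - 1/2 * (norm (v - x0))^2 + (x0 - v) \<bullet> (z - v)"
    using diff[of z v] by simp
  also have "\<dots> = 1/2 * (norm (z - v))^2"
    unfolding power2_norm_eq_inner
    by (simp add: inner_diff_left inner_diff_right inner_commute algebra_simps)
  finally show ?thesis
    by simp
qed

locale agmsdr =
  fixes f :: "'a::euclidean_space \<Rightarrow> real" and g :: "'a \<Rightarrow> 'a" and L :: real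
    and x0 :: 'a and x v y :: "nat \<Rightarrow> 'a" and A a beta h :: "nat \<Rightarrow> real"
  assumes L_pos: "L > 0"
    and grad: "\<And>z. (f has_derivative (\<lambda>d. g z \<bullet> d)) (at z)"
    and lip: "\<And>z w. norm (g z - g w) \<le> L * norm (z - w)"
    and cvx: "convex_on UNIV f"
    and alg: "agmsdr_opt_a f g L x0 x v y A a beta \<or> agmsdr_opt_b f g x0 x v y A a beta h"
    and nonzero: "\<And>i. g (y i) \<noteq> 0"
begin

lemma common: "agmsdr_common f g x0 x v y A a beta"
  using alg unfolding agmsdr_opt_a_def agmsdr_opt_b_def by blast

lemma A_0: "A 0 = 0" and v_0: "v 0 = x0"
  using common unfolding agmsdr_common_def by blast+

lemma A_Suc: "A (Suc k) = A k + a (Suc k)"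
  using common unfolding agmsdr_common_def by blast

lemma v_Suc_minimizes: "psi x0 f g a y (Suc k) (v (Suc k)) \<le> psi x0 f g a y (Suc k) z"
  using common unfolding agmsdr_common_def by blast

lemma line_search_optimality:
  "g (y k) \<bullet> (x k - y k) \<ge> 0" "g (y k) \<bullet> (v k - y k) \<ge> 0"
  using common segment_line_search_optimality[OF grad, of "beta k" "v k" "x k" "y k"]
  unfolding agmsdr_common_def by auto

lemma opt_a_step:
  assumes "agmsdr_opt_a f g L x0 x v y A a beta"
  shows "x (Suc k) = y k - (1 / L) *\<^sub>R g (y k)" "a (Suc k) > 0"
    and "(a (Suc k))^2 / A (Suc k) = 1 / L"
  using assms unfolding agmsdr_opt_a_def A_Suc by auto

lemma opt_b_step:
  assumes "\<not> agmsdr_opt_a f g L x0 x v y A a beta"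
  shows "t \<ge> 0 \<Longrightarrow> f (x (Suc k)) \<le> f (y k - t *\<^sub>R ((1 / norm (g (y k))) *\<^sub>R g (y k)))"
    and "f (y k) - (a (Suc k))^2 / (2 * A (Suc k)) * (norm (g (y k)))^2 = f (x (Suc k))"
    and "f (y k) - b^2 / (2 * (A k + b)) * (norm (g (y k)))^2 = f (x (Suc k)) \<Longrightarrow> b \<le> a (Suc k)"
proof -
  have "agmsdr_opt_b f g x0 x v y A a beta h"
    using assms alg by blast
  then show "t \<ge> 0 \<Longrightarrow> f (x (Suc k)) \<le> f (y k - t *\<^sub>R ((1 / norm (g (y k))) *\<^sub>R g (y k)))"
    and "f (y k) - (a (Suc k))^2 / (2 * A (Suc k)) * (norm (g (y k)))^2 = f (x (Suc k))"
    and "f (y k) - b^2 / (2 * (A k + b)) * (norm (g (y k)))^2 = f (x (Suc k)) \<Longrightarrow> b \<le> a (Suc k)"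
    unfolding agmsdr_opt_b_def A_Suc by auto
qed

text \<open>Both options do at least as well as the plain gradient step \<open>y\<^sub>k - \<nabla>f(y\<^sub>k)/L\<close>; for option (b)
  compare the exact line search with \<open>h = \<parallel>\<nabla>f(y\<^sub>k)\<parallel>/L\<close>.\<close>

lemma gradient_step_decrease: "f (x (Suc k)) \<le> f (y k) - (norm (g (y k)))^2 / (2 * L)"
proof -
  let ?G = "g (y k)"
  have "f (y k + (- (1/L) *\<^sub>R ?G)) \<le> f (y k) + ?G \<bullet> (- (1/L) *\<^sub>R ?G) + L/2 * (norm (- (1/L) *\<^sub>R ?G))^2"
    by (rule lipschitz_gradient_upper_bound[OF grad lip])
  also have "\<dots> = f (y k) - (norm ?G)^2 / (2 * L)"
    using L_pos by (simp add: power2_norm_eq_inner[symmetric] power2_eq_square field_simps)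
  finally have step: "f (y k - (1/L) *\<^sub>R ?G) \<le> f (y k) - (norm ?G)^2 / (2 * L)"
    by simp
  show ?thesis
  proof (cases "agmsdr_opt_a f g L x0 x v y A a beta")
    case True
    with step show ?thesis
      by (simp add: opt_a_step)
  next
    case False
    have "f (x (Suc k)) \<le> f (y k - (norm ?G / L) *\<^sub>R ((1 / norm ?G) *\<^sub>R ?G))"
      using L_pos by (intro opt_b_step(1)[OF False]) simp
    also have "(norm ?G / L) *\<^sub>R ((1 / norm ?G) *\<^sub>R ?G) = (1/L) *\<^sub>R ?G"
      using nonzero[of k] by simp
    finally show ?thesis
      using step by simp
  qed
qed

lemma a_Suc_pos_if: "A k \<ge> 0 \<Longrightarrow> a (Suc k) > 0"
proof (cases "agmsdr_opt_a f g L x0 x v y A a beta")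
  case True
  then show ?thesis
    by (rule opt_a_step)
next
  case False
  assume A_nonneg: "A k \<ge> 0"
  let ?G = "g (y k)"
  define c where "c = (f (y k) - f (x (Suc k))) / (norm ?G)^2"
  have G_pos: "(norm ?G)^2 > 0"
    using nonzero[of k] by simp
  then have "(norm ?G)^2 / (2 * L) > 0"
    using L_pos by simp
  then have "f (y k) - f (x (Suc k)) > 0"
    using gradient_step_decrease[of k] by linarith
  then have c_pos: "c > 0"
    unfolding c_def using G_pos by (rule divide_pos_pos)
  have "b \<le> a (Suc k)" if "b^2 / (2 * (A k + b)) = c" for b
  proof (rule opt_b_step(3)[OF False])
    have "b^2 / (2 * (A k + b)) * (norm ?G)^2 = f (y k) - f (x (Suc k))"
      using that G_pos unfolding c_def by (simp add: eq_divide_eq del: divide_divide_eq_left)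
    then show "f (y k) - b^2 / (2 * (A k + b)) * (norm ?G)^2 = f (x (Suc k))"
      by linarith
  qed
  then show ?thesis
    by (rule largest_root_pos[OF A_nonneg c_pos])
qed

lemma A_nonneg: "A k \<ge> 0"
proof (induction k)
  case 0
  then show ?case
    using A_0 by simp
next
  case (Suc k)
  then have "a (Suc k) > 0"
    by (rule a_Suc_pos_if)
  with Suc show ?case
    unfolding A_Suc by simp
qed

lemma a_Suc_pos: "a (Suc k) > 0"
  using a_Suc_pos_if A_nonneg by blast

lemma A_pos:
  assumes "k \<ge> 1"
  shows "A k > 0"
proof -
  obtain i where "k = Suc i"
    using assms by (cases k) auto
  then show ?thesis
    using A_Suc[of i] A_nonneg[of i] a_Suc_pos[of i] by simp
qed

lemma sum_a_eq_A: "(\<Sum>i<k. a (Suc i)) = A k"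
  by (induction k) (simp_all add: A_0 A_Suc)

lemma A_f_x_Suc_le:
  "A (Suc k) * f (x (Suc k)) \<le> A (Suc k) * f (y k) - (a (Suc k))^2 / 2 * (norm (g (y k)))^2"
proof (cases "agmsdr_opt_a f g L x0 x v y A a beta")
  case True
  have A_pos': "A (Suc k) > 0"
    by (rule A_pos) simp
  have "(a (Suc k))^2 = A (Suc k) / L"
    using opt_a_step(3)[OF True, of k] A_pos' L_pos by (simp add: field_simps)
  moreover have "A (Suc k) * f (x (Suc k)) \<le> A (Suc k) * (f (y k) - (norm (g (y k)))^2 / (2 * L))"
    using gradient_step_decrease[of k] A_pos' by (simp add: mult_left_mono)
  ultimately show ?thesis
    by (simp add: field_simps)
next
  case False
  have "A (Suc k) > 0"
    by (rule A_pos) simp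
  with opt_b_step(2)[OF False, of k] show ?thesis
    by (simp add: field_simps)
qed

lemma psi_eq_at_v: "psi x0 f g a y k z = psi x0 f g a y k (v k) + 1/2 * (norm (z - v k))^2"
proof (cases k)
  case 0
  then show ?thesis
    using v_0 unfolding psi_def lin_model_def by simp
next
  case (Suc i)
  then show ?thesis
    using psi_eq_minimum_plus_dist v_Suc_minimizes by blast
qed

lemma A_f_x_le_psi_min: "A k * f (x k) \<le> psi x0 f g a y k (v k)"
proof (induction k)
  case 0
  then show ?case
    using A_0 v_0 unfolding psi_def lin_model_def by simp
next
  case (Suc k)
  define G where "G = g (y k)"
  define d where "d = v (Suc k) - v k"
  define \<alpha> where "\<alpha> = a (Suc k)"
  have psi_Suc: "psi x0 f g a y (Suc k) (v (Suc k))
      = psi x0 f g a y k (v k) + 1/2 * (norm d)^2 + \<alpha> * (f (y k) + G \<bullet> (v k - y k)) + \<alpha> * (G \<bullet> d)"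
    using psi_eq_at_v[of k "v (Suc k)"]
    unfolding psi_def lin_model_Suc G_def d_def \<alpha>_def by (simp add: inner_diff_right algebra_simps)
  have "f (y k) \<le> f (y k) + G \<bullet> (x k - y k)"
    using line_search_optimality(1) unfolding G_def by simp
  also have "\<dots> \<le> f (x k)"
    unfolding G_def by (rule convex_on_gradient_inequality[OF grad cvx])
  finally have "A k * f (y k) \<le> A k * f (x k)"
    using A_nonneg by (simp add: mult_left_mono)
  moreover have "\<alpha> * (G \<bullet> (v k - y k)) \<ge> 0"
    using line_search_optimality(2)[of k] a_Suc_pos[of k] unfolding \<alpha>_def G_def by simp
  moreover have "0 \<le> (norm (d + \<alpha> *\<^sub>R G))^2"
    by simp
  then have "1/2 * (norm d)^2 + \<alpha> * (G \<bullet> d) \<ge> - (\<alpha>^2 / 2 * (norm G)^2)"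
    unfolding power2_norm_eq_inner
    by (simp add: inner_add_left inner_add_right inner_commute power2_eq_square algebra_simps)
  moreover have "A (Suc k) * f (x (Suc k)) \<le> A (Suc k) * f (y k) - \<alpha>^2 / 2 * (norm G)^2"
    using A_f_x_Suc_le unfolding \<alpha>_def G_def .
  ultimately show ?case
    using Suc.IH psi_Suc A_Suc[of k] unfolding \<alpha>_def by (simp add: algebra_simps)
qed

lemma f_x_minus_bound_le_lin_model:
  assumes "k \<ge> 1" and "norm (z - x0) \<le> R"
  shows "f (x k) - R^2 / (2 * A k) \<le> (1 / A k) * lin_model f g a y k z"
proof -
  have "A k * f (x k) \<le> psi x0 f g a y k z"
    using A_f_x_le_psi_min[of k] psi_eq_at_v[of k z] zero_le_power2[of "norm (z - v k)"] by linarith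
  also have "\<dots> \<le> R^2 / 2 + lin_model f g a y k z"
    unfolding psi_def using assms(2) by (simp add: power_mono)
  finally have "(A k * f (x k) - R^2 / 2) / A k \<le> lin_model f g a y k z / A k"
    using A_pos[OF assms(1)] by (simp add: divide_right_mono)
  moreover have "(A k * f (x k) - R^2 / 2) / A k = f (x k) - R^2 / (2 * A k)"
    using A_pos[OF assms(1)] by (simp add: field_simps)
  ultimately show ?thesis
    by simp
qed

lemma lin_model_le_A_mult: "lin_model f g a y k z \<le> A k * f z"
  using lin_model_le_sum_mult[OF grad cvx] a_Suc_pos sum_a_eq_A by (metis less_imp_le)

end

theorem mainTheorem5:
  fixes f :: "'a::euclidean_space \<Rightarrow> real" and g :: "'a \<Rightarrow> 'a" and L :: real
    and x0 xs :: 'a and x v y :: "nat \<Rightarrow> 'a" and A a beta h :: "nat \<Rightarrow> real" and k :: nat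
  assumes L_pos: "L > 0"
    and grad: "\<And>z. (f has_derivative (\<lambda>d. g z \<bullet> d)) (at z)"
    and lip: "\<And>z w. norm (g z - g w) \<le> L * norm (z - w)"
    and cvx: "convex_on UNIV f"
    and minimizer: "\<And>z. f xs \<le> f z"
    and alg: "agmsdr_opt_a f g L x0 x v y A a beta \<or> agmsdr_opt_b f g x0 x v y A a beta h"
    and nonzero: "\<And>i. g (y i) \<noteq> 0"
    and k: "k \<ge> 1"
  shows "(let R = norm (x0 - xs);
              fhat = (INF z\<in>cball x0 R. (1 / A k) * lin_model f g a y k z)
          in fhat \<le> f xs \<and> f (x k) - fhat \<le> R^2 / (2 * A k)
             \<and> f (x k) - f xs \<le> f (x k) - fhat)"
proof -
  interpret agmsdr f g L x0 x v y A a beta h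
    using assms by unfold_locales
  define R where "R = norm (x0 - xs)"
  define F where "F z = (1 / A k) * lin_model f g a y k z" for z
  have lower: "f (x k) - R^2 / (2 * A k) \<le> F z" if "z \<in> cball x0 R" for z
    using f_x_minus_bound_le_lin_model[OF k] that unfolding F_def
    by (simp add: dist_norm norm_minus_commute)
  have "xs \<in> cball x0 R"
    unfolding R_def by (simp add: dist_norm)
  moreover have "F xs \<le> f xs"
    using lin_model_le_A_mult[of k xs] A_pos[OF k] unfolding F_def by (simp add: field_simps)
  ultimately have "(INF z\<in>cball x0 R. F z) \<le> f xs"
    using lower by (meson bdd_belowI2 cINF_lower order_trans)
  moreover have "f (x k) - R^2 / (2 * A k) \<le> (INF z\<in>cball x0 R. F z)"
    using lower by (intro cINF_greatest) (auto simp: R_def)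
  ultimately show ?thesis
    unfolding Let_def F_def R_def by simp
qed

end
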